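(* Let $s,n,k$ be positive integers, $\Gamma=\mathbb{Z}_{sn}\mathbin{\mathrm{wr}}\mathbb{Z}^k$ and $G=\mathbb{Z}_n\mathbin{\mathrm{wr}}\mathbb{Z}^k$, and let $\Pi\colon\Gamma\to G$ be the homomorphism reducing coefficients mod $n$ (defined in the context). Then $\ker\Pi$ is a completely invariant subgroup of $\Gamma$, i.e. it is mapped into itself by every endomorphism of $\Gamma$.
   Context: For a positive integer $m$, $\mathbb{Z}_m\mathbin{\mathrm{wr}}\mathbb{Z}^k=\bigoplus_{x\in\mathbb{Z}^k}(\mathbb{Z}_m)_x\rtimes_\alpha\mathbb{Z}^k$ is the restricted wreath product, where $\alpha(z)$ maps $(\mathbb{Z}_m)_x$ onto $(\mathbb{Z}_m)_{z+x}$. Let $\Sigma$, $\Omega$ denote the torsion subgroups $\bigoplus_x(\mathbb{Z}_{sn})_x$ of $\Gamma$ and $\bigoplus_x(\mathbb{Z}_n)_x$ of $G$, with generators $\Delta_x$ of $(\mathbb{Z}_{sn})_x$ and $\delta_x$ of $(\mathbb{Z}_n)_x$. Define $\pi\colon\Sigma\to\Omega$ by $\pi(k_1\Delta_{x_1}+\dots+k_l\Delta_{x_l})=(k_1\bmod n)\delta_{x_1}+\dots+(k_l\bmod n)\delta_{x_l}$, and $\Pi(\sigma,z)=(\pi(\sigma),z)$ for $\sigma\in\Sigma$, $z\in\mathbb{Z}^k$. *)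

theory Defs
  imports "HOL-Algebra.Algebra"
begin

definition lattice :: "nat \<Rightarrow> (nat \<Rightarrow> int) set" where
  "lattice k = {z. \<forall>i\<ge>k. z i = 0}"

definition vadd :: "(nat \<Rightarrow> int) \<Rightarrow> (nat \<Rightarrow> int) \<Rightarrow> (nat \<Rightarrow> int)" where
  "vadd z w = (\<lambda>i. z i + w i)"

definition vsub :: "(nat \<Rightarrow> int) \<Rightarrow> (nat \<Rightarrow> int) \<Rightarrow> (nat \<Rightarrow> int)" where
  "vsub z w = (\<lambda>i. z i - w i)"

text \<open>Finitely supported functions Z^k -> Z_m (residues represented in {0..<m}),
  i.e. the direct sum of copies (Z_m)_x over x in Z^k.\<close>
definition fin_sup :: "int \<Rightarrow> nat \<Rightarrow> ((nat \<Rightarrow> int) \<Rightarrow> int) set" where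
  "fin_sup m k = {\<sigma>. (\<forall>x. 0 \<le> \<sigma> x \<and> \<sigma> x < m) \<and> (\<forall>x. \<sigma> x \<noteq> 0 \<longrightarrow> x \<in> lattice k)
                      \<and> finite {x. \<sigma> x \<noteq> 0}}"

text \<open>Restricted wreath product Z_m wr Z^k = (direct sum) \<rtimes>_alpha Z^k,
  where alpha(z) maps (Z_m)_x onto (Z_m)_(z+x), i.e. (alpha(z) tau)(x) = tau(x - z).\<close>
definition wreath :: "int \<Rightarrow> nat \<Rightarrow> (((nat \<Rightarrow> int) \<Rightarrow> int) \<times> (nat \<Rightarrow> int)) monoid" where
  "wreath m k = \<lparr> carrier = fin_sup m k \<times> lattice k,
     monoid.mult = (\<lambda>a b. ((\<lambda>x. (fst a x + fst b (vsub x (snd a))) mod m), vadd (snd a) (snd b))),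
     monoid.one = ((\<lambda>x. 0), (\<lambda>i. 0)) \<rparr>"

definition Pi_red :: "int \<Rightarrow> ((nat \<Rightarrow> int) \<Rightarrow> int) \<times> (nat \<Rightarrow> int)
                       \<Rightarrow> ((nat \<Rightarrow> int) \<Rightarrow> int) \<times> (nat \<Rightarrow> int)" where
  "Pi_red n = (\<lambda>(\<sigma>, z). (\<lambda>x. \<sigma> x mod n, z))"

end

theory Submission
  imports Defs
begin

text \<open>The kernel of \<open>\<Pi>\<close> is exactly the set of elements \<open>g\<close> of \<open>\<Gamma>\<close> with \<open>g\<^sup>s = 1\<close>:
  the translation part of \<open>(\<sigma>, z)\<^sup>s\<close> is \<open>s z\<close>, which vanishes only for \<open>z = 0\<close>, and
  \<open>(\<sigma>, 0)\<^sup>s = (s \<sigma> mod s n, 0)\<close> is trivial iff \<open>n\<close> divides every coefficient of \<open>\<sigma>\<close>.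
  Every endomorphism preserves the equation \<open>g\<^sup>s = 1\<close>, and the kernel is a subgroup
  because \<open>\<Pi>\<close> is a homomorphism of groups.\<close>

lemma vsub_vsub: "vsub (vsub x z) w = vsub x (vadd z w)"
  by (simp add: vsub_def vadd_def algebra_simps)

lemma vsub_zero [simp]: "vsub x (\<lambda>i. 0) = x"
  by (simp add: vsub_def)

lemma vadd_in_lattice: "z \<in> lattice k \<Longrightarrow> w \<in> lattice k \<Longrightarrow> vadd z w \<in> lattice k"
  by (simp add: lattice_def vadd_def)

lemma uminus_in_lattice: "z \<in> lattice k \<Longrightarrow> (\<lambda>i. - z i) \<in> lattice k"
  by (simp add: lattice_def)

lemma fin_supI:
  assumes "\<And>x. 0 \<le> \<rho> x \<and> \<rho> x < m" and "{x. \<rho> x \<noteq> 0} \<subseteq> A" and "finite A"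
    and "A \<subseteq> lattice k"
  shows "\<rho> \<in> fin_sup m k"
  using assms finite_subset by (auto simp: fin_sup_def)

lemma support_translate_eq:
  "{x. \<sigma> (vsub x z) \<noteq> 0} = (\<lambda>y. vadd y z) ` {y. \<sigma> y \<noteq> 0}"
proof -
  have "vadd (vsub x z) z = x" "vsub (vadd y z) z = y" for x y
    by (simp_all add: vadd_def vsub_def)
  then show ?thesis
    by (auto simp: image_iff) metis
qed

lemma fin_sup_translate:
  assumes "\<sigma> \<in> fin_sup m k" and "z \<in> lattice k"
  shows "finite {x. \<sigma> (vsub x z) \<noteq> 0}" and "{x. \<sigma> (vsub x z) \<noteq> 0} \<subseteq> lattice k"
  using assms by (auto simp: support_translate_eq fin_sup_def intro: vadd_in_lattice)

lemma wreath_mult_closed: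
  assumes "m > 0" and "a \<in> carrier (wreath m k)" and "b \<in> carrier (wreath m k)"
  shows "a \<otimes>\<^bsub>wreath m k\<^esub> b \<in> carrier (wreath m k)"
proof -
  obtain \<sigma> z \<tau> w where a: "a = (\<sigma>, z)" and b: "b = (\<tau>, w)"
    by (cases a, cases b)
  have \<sigma>: "\<sigma> \<in> fin_sup m k" and z: "z \<in> lattice k" and \<tau>: "\<tau> \<in> fin_sup m k"
    and w: "w \<in> lattice k"
    using assms a b by (auto simp: wreath_def)
  have "(\<lambda>x. (\<sigma> x + \<tau> (vsub x z)) mod m) \<in> fin_sup m k"
    by (rule fin_supI[where A = "{x. \<sigma> x \<noteq> 0} \<union> {x. \<tau> (vsub x z) \<noteq> 0}"])
      (use assms(1) \<sigma> fin_sup_translate[OF \<tau> z] in \<open>auto simp: fin_sup_def\<close>)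
  then show ?thesis
    using a b z w by (simp add: wreath_def vadd_in_lattice)
qed

lemma wreath_l_inv_ex:
  assumes "m > 0" and "a \<in> carrier (wreath m k)"
  shows "\<exists>b \<in> carrier (wreath m k). b \<otimes>\<^bsub>wreath m k\<^esub> a = \<one>\<^bsub>wreath m k\<^esub>"
proof -
  obtain \<sigma> z where a: "a = (\<sigma>, z)"
    by (cases a)
  have \<sigma>: "\<sigma> \<in> fin_sup m k" and z: "z \<in> lattice k"
    using assms a by (auto simp: wreath_def)
  define w where "w = (\<lambda>i. - z i)"
  have w: "w \<in> lattice k"
    unfolding w_def using z by (rule uminus_in_lattice)
  define \<tau> where "\<tau> = (\<lambda>x. (- \<sigma> (vsub x w)) mod m)"
  have "\<tau> \<in> fin_sup m k"
    unfolding \<tau>_def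
    by (rule fin_supI[where A = "{x. \<sigma> (vsub x w) \<noteq> 0}"])
      (use assms(1) fin_sup_translate[OF \<sigma> w] in auto)
  moreover have "(\<tau>, w) \<otimes>\<^bsub>wreath m k\<^esub> a = \<one>\<^bsub>wreath m k\<^esub>"
    using a by (simp add: wreath_def \<tau>_def w_def vadd_def fun_eq_iff mod_add_left_eq)
  ultimately show ?thesis
    using w by (auto simp: wreath_def)
qed

lemma wreath_assoc:
  "(a \<otimes>\<^bsub>wreath m k\<^esub> b) \<otimes>\<^bsub>wreath m k\<^esub> c = a \<otimes>\<^bsub>wreath m k\<^esub> (b \<otimes>\<^bsub>wreath m k\<^esub> c)"
  by (simp add: wreath_def vsub_vsub mod_add_left_eq mod_add_right_eq add.assoc)
    (simp add: vadd_def add.assoc)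

lemma group_wreath:
  assumes "m > 0"
  shows "group (wreath m k)"
proof (rule groupI)
  show "\<one>\<^bsub>wreath m k\<^esub> \<in> carrier (wreath m k)"
    using assms by (simp add: wreath_def fin_sup_def lattice_def)
  show "\<one>\<^bsub>wreath m k\<^esub> \<otimes>\<^bsub>wreath m k\<^esub> a = a" if "a \<in> carrier (wreath m k)" for a
    using that by (auto simp: wreath_def fin_sup_def vadd_def)
qed (use assms wreath_mult_closed wreath_assoc wreath_l_inv_ex in auto)

lemma Pi_red_hom:
  assumes "n > 0" and "n dvd m"
  shows "Pi_red n \<in> hom (wreath m k) (wreath n k)"
proof (rule homI)
  show "Pi_red n a \<in> carrier (wreath n k)" if "a \<in> carrier (wreath m k)" for a
  proof -
    obtain \<sigma> z where a: "a = (\<sigma>, z)"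
      by (cases a)
    have \<sigma>: "\<sigma> \<in> fin_sup m k" and z: "z \<in> lattice k"
      using that a by (auto simp: wreath_def)
    have "(\<lambda>x. \<sigma> x mod n) \<in> fin_sup n k"
      by (rule fin_supI[where A = "{x. \<sigma> x \<noteq> 0}"]) (use assms(1) \<sigma> in \<open>auto simp: fin_sup_def\<close>)
    then show ?thesis
      using a z by (simp add: Pi_red_def wreath_def)
  qed
  show "Pi_red n (a \<otimes>\<^bsub>wreath m k\<^esub> b) = Pi_red n a \<otimes>\<^bsub>wreath n k\<^esub> Pi_red n b" for a b
    using assms(2) by (cases a, cases b) (simp add: Pi_red_def wreath_def mod_mod_cancel mod_add_eq)
qed

lemma wreath_nat_pow_snd: "snd (a [^]\<^bsub>wreath m k\<^esub> j) = (\<lambda>i. int j * snd a i)"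
  by (induct j) (auto simp: nat_pow_def wreath_def vadd_def algebra_simps)

lemma wreath_nat_pow_fst:
  assumes "snd a = (\<lambda>i. 0)"
  shows "fst (a [^]\<^bsub>wreath m k\<^esub> j) = (\<lambda>x. (int j * fst a x) mod m)"
proof (induct j)
  case 0
  then show ?case
    by (simp add: nat_pow_def wreath_def)
next
  case (Suc j)
  then show ?case
    using wreath_nat_pow_snd[of m k a j] assms
    by (simp add: nat_pow_def wreath_def mod_add_right_eq algebra_simps)
qed

lemma wreath_one: "\<one>\<^bsub>wreath m k\<^esub> = ((\<lambda>x. 0), (\<lambda>i. 0))"
  by (simp add: wreath_def)

lemma kernel_Pi_red_eq_pow_eq_one:
  fixes s n :: int
  assumes "s > 0" and "n > 0"
  shows "kernel (wreath (s * n) k) (wreath n k) (Pi_red n)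
       = {g \<in> carrier (wreath (s * n) k). g [^]\<^bsub>wreath (s * n) k\<^esub> nat s = \<one>\<^bsub>wreath (s * n) k\<^esub>}"
proof -
  have "Pi_red n (\<sigma>, z) = \<one>\<^bsub>wreath n k\<^esub> \<longleftrightarrow> (\<sigma>, z) [^]\<^bsub>wreath (s * n) k\<^esub> nat s = \<one>\<^bsub>wreath (s * n) k\<^esub>"
    for \<sigma> z
  proof -
    let ?p = "(\<sigma>, z) [^]\<^bsub>wreath (s * n) k\<^esub> nat s"
    have "snd ?p = (\<lambda>i. s * z i)"
      unfolding wreath_nat_pow_snd using assms(1) by simp
    then have p_one: "?p = \<one>\<^bsub>wreath (s * n) k\<^esub> \<longleftrightarrow> fst ?p = (\<lambda>x. 0) \<and> z = (\<lambda>i. 0)"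
      using assms(1) by (auto simp: wreath_one prod_eq_iff fun_eq_iff)
    have fst_p: "fst ?p = (\<lambda>x. s * (\<sigma> x mod n))" if "z = (\<lambda>i. 0)"
      using that assms(1) wreath_nat_pow_fst[where a = "(\<sigma>, z)" and m = "s * n" and j = "nat s"]
      by (simp add: mod_mult_mult1)
    show ?thesis
      using p_one fst_p assms(1) by (auto simp: Pi_red_def wreath_one fun_eq_iff)
  qed
  then show ?thesis
    by (auto simp: kernel_def)
qed

lemma hom_image_pow_eq_one:
  assumes "group G" and "group H" and "h \<in> hom G H"
  shows "h ` {g \<in> carrier G. g [^]\<^bsub>G\<^esub> (e::nat) = \<one>\<^bsub>G\<^esub>}
         \<subseteq> {g \<in> carrier H. g [^]\<^bsub>H\<^esub> e = \<one>\<^bsub>H\<^esub>}"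
proof -
  interpret group_hom G H h
    using assms by (simp add: group_hom_def group_hom_axioms_def)
  show ?thesis
    by (auto simp flip: hom_nat_pow)
qed

theorem lemma3p1:
  fixes s n :: int and k :: nat
  assumes "s > 0" and "n > 0" and "k > 0"
  shows "subgroup (kernel (wreath (s * n) k) (wreath n k) (Pi_red n)) (wreath (s * n) k)
       \<and> (\<forall>h \<in> hom (wreath (s * n) k) (wreath (s * n) k).
            h ` kernel (wreath (s * n) k) (wreath n k) (Pi_red n)
              \<subseteq> kernel (wreath (s * n) k) (wreath n k) (Pi_red n))"
proof
  have groups: "group (wreath (s * n) k)" "group (wreath n k)"
    using assms by (simp_all add: group_wreath)
  have "Pi_red n \<in> hom (wreath (s * n) k) (wreath n k)"
    using assms by (simp add: Pi_red_hom)
  with groups show "subgroup (kernel (wreath (s * n) k) (wreath n k) (Pi_red n)) (wreath (s * n) k)"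
    by (simp add: group_hom.subgroup_kernel group_hom_def group_hom_axioms_def)
  show "\<forall>h \<in> hom (wreath (s * n) k) (wreath (s * n) k).
          h ` kernel (wreath (s * n) k) (wreath n k) (Pi_red n)
            \<subseteq> kernel (wreath (s * n) k) (wreath n k) (Pi_red n)"
    unfolding kernel_Pi_red_eq_pow_eq_one[OF assms(1,2)]
    using hom_image_pow_eq_one[OF groups(1) groups(1)] by blast
qed

end
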